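(* Let $G=(V,E)$ be a connected undirected graph on $n$ nodes with Laplacian $L$, let $\kappa_1,\dots,\kappa_n>0$, and let $D_\kappa=\mathrm{diag}(\kappa_1,\dots,\kappa_n)$. For $S\subseteq V$ let $D_S$ be the diagonal $0/1$ matrix with $(D_S)_{ii}=1$ iff $i\in S$, and set $Q_S=L+D_\kappa D_S$ (write $Q_v$ for $Q_{\{v\}}$). Define $f:2^V\to\mathbb{R}$ by $f(\emptyset)=0$ and $f(S)=C-\mathrm{tr}(Q_S^{-1})$ for $S\neq\emptyset$, where $C=2\max_{v\in V}\mathrm{tr}(Q_v^{-1})$. Then $f$ is non-decreasing: for all $S_1\subseteq S_2\subseteq V$, $f(S_1)\le f(S_2)$.
   Context: For nonempty $S$, the matrix $Q_S$ is positive definite, so $Q_S^{-1}$ exists. A set function $f$ is non-decreasing if $A\subseteq B$ implies $f(A)\le f(B)$. *)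

theory Defs
  imports "HOL-Analysis.Analysis"
begin

text \<open>Vertices are the elements of a finite type 'n (so n = CARD('n)).
  A simple undirected graph is a symmetric irreflexive edge relation E.\<close>

definition undirected_graph :: "('n \<Rightarrow> 'n \<Rightarrow> bool) \<Rightarrow> bool" where
  "undirected_graph E \<longleftrightarrow> (\<forall>u v. E u v \<longrightarrow> E v u) \<and> (\<forall>v. \<not> E v v)"

definition connected_graph :: "('n \<Rightarrow> 'n \<Rightarrow> bool) \<Rightarrow> bool" where
  "connected_graph E \<longleftrightarrow> (\<forall>u v. E\<^sup>*\<^sup>* u v)"

definition laplacian :: "('n::finite \<Rightarrow> 'n \<Rightarrow> bool) \<Rightarrow> real^'n^'n" where
  "laplacian E = (\<chi> i j. if i = j then real (card {k. E i k})
                           else if E i j then -1 else 0)"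

definition diag_mat :: "('n::finite \<Rightarrow> real) \<Rightarrow> real^'n^'n" where
  "diag_mat d = (\<chi> i j. if i = j then d i else 0)"

definition sel_mat :: "'n::finite set \<Rightarrow> real^'n^'n" where
  "sel_mat S = diag_mat (\<lambda>i. if i \<in> S then 1 else 0)"

definition Q_mat :: "('n::finite \<Rightarrow> 'n \<Rightarrow> bool) \<Rightarrow> ('n \<Rightarrow> real) \<Rightarrow> 'n set \<Rightarrow> real^'n^'n" where
  "Q_mat E \<kappa> S = laplacian E + diag_mat \<kappa> ** sel_mat S"

definition C_const :: "('n::finite \<Rightarrow> 'n \<Rightarrow> bool) \<Rightarrow> ('n \<Rightarrow> real) \<Rightarrow> real" where
  "C_const E \<kappa> = 2 * Max (range (\<lambda>v. trace (matrix_inv (Q_mat E \<kappa> {v}))))"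

definition f_set :: "('n::finite \<Rightarrow> 'n \<Rightarrow> bool) \<Rightarrow> ('n \<Rightarrow> real) \<Rightarrow> 'n set \<Rightarrow> real" where
  "f_set E \<kappa> S = (if S = {} then 0 else C_const E \<kappa> - trace (matrix_inv (Q_mat E \<kappa> S)))"

end

theory Submission
  imports Defs
begin

text \<open>The quadratic form of \<open>Q\<^sub>S\<close> is the Dirichlet energy of the graph plus
  \<open>\<Sum>i\<in>S. \<kappa>\<^sub>i x\<^sub>i\<^sup>2\<close>, so \<open>Q\<^sub>S\<close> is symmetric positive semidefinite, increases in the
  Loewner order with \<open>S\<close>, and is invertible for nonempty \<open>S\<close> because on a connected graph only
  constant vectors have zero energy. Matrix inversion reverses the Loewner order, and the trace is a
  sum of quadratic forms, so \<open>tr(Q\<^sub>S\<^sup>-\<^sup>1)\<close> decreases in \<open>S\<close>. The step from \<open>\<emptyset>\<close> to a nonempty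
  \<open>S \<ni> v\<close> is covered by \<open>tr(Q\<^sub>S\<^sup>-\<^sup>1) \<le> tr(Q\<^sub>v\<^sup>-\<^sup>1) \<le> C/2 \<le> C\<close>.\<close>

lemma matrix_inv_right:
  fixes A :: "'a::semiring_1^'n^'n"
  assumes "invertible A"
  shows "A ** matrix_inv A = mat 1"
  using someI_ex[OF assms[unfolded invertible_def]] unfolding matrix_inv_def by blast

lemma matrix_vector_mult_matrix_inv:
  fixes A :: "'a::semiring_1^'n^'n"
  assumes "invertible A"
  shows "A *v (matrix_inv A *v x) = x"
  by (simp add: matrix_vector_mul_assoc matrix_inv_right[OF assms])

lemma trace_eq_sum_quadratic_form_axis:
  fixes M :: "real^'n::finite^'n"
  shows "trace M = (\<Sum>i\<in>UNIV. axis i 1 \<bullet> (M *v axis i 1))"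
proof -
  have "axis i 1 \<bullet> (M *v axis i 1) = M $ i $ i" for i
    unfolding inner_axis' by (simp add: matrix_vector_mult_def axis_def if_distrib cong: if_cong)
  then show ?thesis unfolding trace_def by simp
qed

lemma matrix_inv_quadratic_form_nonneg:
  fixes A :: "real^'n::finite^'n"
  assumes "invertible A" "\<And>y. 0 \<le> y \<bullet> (A *v y)"
  shows "0 \<le> x \<bullet> (matrix_inv A *v x)"
  using assms(2)[of "matrix_inv A *v x"]
  by (simp add: matrix_vector_mult_matrix_inv[OF assms(1)] inner_commute)

text \<open>Only the smaller matrix \<open>A\<close> needs to be symmetric and positive semidefinite: with
  \<open>y = B\<^sup>-\<^sup>1x\<close> and \<open>z = A\<^sup>-\<^sup>1x\<close>, expanding \<open>0 \<le> (y - z)\<^sup>TA(y - z)\<close> and using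
  \<open>y\<^sup>TAy \<le> y\<^sup>TBy = y\<^sup>Tx\<close> gives \<open>x\<^sup>Ty \<le> x\<^sup>Tz\<close>.\<close>

lemma matrix_inv_quadratic_form_antimono:
  fixes A B :: "real^'n::finite^'n"
  assumes "invertible A" "invertible B" "transpose A = A"
    and "\<And>y. 0 \<le> y \<bullet> (A *v y)" and "\<And>y. y \<bullet> (A *v y) \<le> y \<bullet> (B *v y)"
  shows "x \<bullet> (matrix_inv B *v x) \<le> x \<bullet> (matrix_inv A *v x)"
proof -
  define y where "y = matrix_inv B *v x"
  define z where "z = matrix_inv A *v x"
  have By: "B *v y = x" and Az: "A *v z = x"
    unfolding y_def z_def by (simp_all add: matrix_vector_mult_matrix_inv assms(1,2))
  have symm: "z \<bullet> (A *v y) = y \<bullet> (A *v z)"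
    by (metis assms(3) dot_lmul_matrix inner_commute transpose_matrix_vector)
  have "0 \<le> (y - z) \<bullet> (A *v (y - z))" by (rule assms(4))
  also have "\<dots> = y \<bullet> (A *v y) - y \<bullet> (A *v z) - z \<bullet> (A *v y) + z \<bullet> (A *v z)"
    by (simp add: matrix_vector_mult_diff_distrib inner_diff_left inner_diff_right)
  finally have "0 \<le> y \<bullet> (A *v y) - 2 * (x \<bullet> y) + x \<bullet> z"
    using Az symm by (simp add: inner_commute)
  moreover have "y \<bullet> (A *v y) \<le> x \<bullet> y"
    using assms(5)[of y] By by (simp add: inner_commute)
  ultimately show ?thesis unfolding y_def z_def by simp
qed

lemma trace_matrix_inv_antimono:
  fixes A B :: "real^'n::finite^'n"
  assumes "invertible A" "invertible B" "transpose A = A"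
    and "\<And>y. 0 \<le> y \<bullet> (A *v y)" and "\<And>y. y \<bullet> (A *v y) \<le> y \<bullet> (B *v y)"
  shows "trace (matrix_inv B) \<le> trace (matrix_inv A)"
  unfolding trace_eq_sum_quadratic_form_axis
  by (rule sum_mono, rule matrix_inv_quadratic_form_antimono[OF assms])

lemma trace_matrix_inv_nonneg:
  fixes A :: "real^'n::finite^'n"
  assumes "invertible A" "\<And>y. 0 \<le> y \<bullet> (A *v y)"
  shows "0 \<le> trace (matrix_inv A)"
  unfolding trace_eq_sum_quadratic_form_axis
  by (rule sum_nonneg, rule matrix_inv_quadratic_form_nonneg[OF assms])

lemma connected_graph_constant:
  assumes "connected_graph E" "\<And>i j. E i j \<Longrightarrow> g i = g j"
  shows "g u = g v"
proof -
  have "E\<^sup>*\<^sup>* v u" using assms(1) unfolding connected_graph_def by blast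
  then show ?thesis by induction (auto dest: assms(2))
qed

lemma laplacian_mult_component:
  assumes "undirected_graph E"
  shows "(laplacian E *v x) $ i = (\<Sum>j\<in>UNIV. if E i j then x $ i - x $ j else 0)"
proof -
  have "\<not> E i i" using assms unfolding undirected_graph_def by blast
  then have "(laplacian E *v x) $ i = (\<Sum>j\<in>UNIV. (if j = i then real (card {k. E i k}) * x $ i else 0)
      - (if E i j then x $ j else 0))"
    unfolding matrix_vector_mult_def laplacian_def by (auto intro!: sum.cong)
  also have "\<dots> = real (card {k. E i k}) * x $ i - (\<Sum>j\<in>UNIV. if E i j then x $ j else 0)"
    by (simp add: sum_subtractf)
  also have "real (card {k. E i k}) * x $ i = (\<Sum>j\<in>UNIV. if E i j then x $ i else 0)"
    by (simp add: sum.If_cases)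
  finally show ?thesis by (simp add: sum_subtractf[symmetric] if_distrib cong: if_cong)
qed

lemma laplacian_quadratic_form:
  assumes "undirected_graph E"
  shows "x \<bullet> (laplacian E *v x) = (\<Sum>i\<in>UNIV. \<Sum>j\<in>UNIV. if E i j then (x $ i - x $ j)\<^sup>2 else 0) / 2"
proof -
  have symm: "E i j = E j i" for i j using assms unfolding undirected_graph_def by blast
  let ?a = "\<Sum>i\<in>UNIV. \<Sum>j\<in>UNIV. if E i j then x $ i * (x $ i - x $ j) else 0"
  have a: "x \<bullet> (laplacian E *v x) = ?a"
    unfolding inner_vec_def laplacian_mult_component[OF assms]
    by (simp add: sum_distrib_left if_distrib cong: if_cong)
  have "?a = (\<Sum>j\<in>UNIV. \<Sum>i\<in>UNIV. if E i j then x $ i * (x $ i - x $ j) else 0)"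
    by (rule sum.swap)
  also have "\<dots> = (\<Sum>i\<in>UNIV. \<Sum>j\<in>UNIV. if E i j then x $ j * (x $ j - x $ i) else 0)"
    using symm by simp
  finally have "2 * ?a = ?a + (\<Sum>i\<in>UNIV. \<Sum>j\<in>UNIV. if E i j then x $ j * (x $ j - x $ i) else 0)"
    by simp
  also have "\<dots> = (\<Sum>i\<in>UNIV. \<Sum>j\<in>UNIV. if E i j then (x $ i - x $ j)\<^sup>2 else 0)"
    by (simp add: sum.distrib[symmetric] power2_eq_square algebra_simps if_distrib cong: if_cong)
  finally show ?thesis using a by simp
qed

lemma laplacian_quadratic_form_nonneg:
  assumes "undirected_graph E"
  shows "0 \<le> x \<bullet> (laplacian E *v x)"
  unfolding laplacian_quadratic_form[OF assms] by (intro divide_nonneg_pos sum_nonneg) auto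

lemma laplacian_quadratic_form_eq_0_imp_edge:
  assumes "undirected_graph E" "x \<bullet> (laplacian E *v x) = 0" "E i j"
  shows "x $ i = x $ j"
proof -
  have "(\<Sum>i\<in>UNIV. \<Sum>j\<in>UNIV. if E i j then (x $ i - x $ j)\<^sup>2 else 0) = (0::real)"
    using assms(2) unfolding laplacian_quadratic_form[OF assms(1)] by simp
  then have "\<forall>i\<in>UNIV. \<forall>j\<in>UNIV. (if E i j then (x $ i - x $ j)\<^sup>2 else 0) = (0::real)"
    by (simp add: sum_nonneg sum_nonneg_eq_0_iff)
  with assms(3) show ?thesis by (metis UNIV_I power_eq_0_iff right_minus_eq)
qed

lemma diag_mat_mult_entry: "(diag_mat d ** M) $ i $ j = d i * M $ i $ j"
proof -
  have "(\<Sum>k\<in>UNIV. diag_mat d $ i $ k * M $ k $ j) = (\<Sum>k\<in>UNIV. if k = i then d i * M $ i $ j else 0)"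
    by (rule sum.cong) (auto simp: diag_mat_def)
  then show ?thesis by (simp add: matrix_matrix_mult_def)
qed

lemma diag_sel_mult_component:
  "((diag_mat \<kappa> ** sel_mat S) *v x) $ i = (if i \<in> S then \<kappa> i * x $ i else 0)"
proof -
  have "(\<Sum>j\<in>UNIV. (diag_mat \<kappa> ** sel_mat S) $ i $ j * x $ j)
      = (\<Sum>j\<in>UNIV. if j = i then (if i \<in> S then \<kappa> i * x $ i else 0) else 0)"
    unfolding diag_mat_mult_entry by (rule sum.cong) (auto simp: sel_mat_def diag_mat_def)
  then show ?thesis by (simp add: matrix_vector_mult_def)
qed

lemma Q_mat_symmetric:
  assumes "undirected_graph E"
  shows "transpose (Q_mat E \<kappa> S) = Q_mat E \<kappa> S"
proof -
  have "E i j = E j i" for i j using assms unfolding undirected_graph_def by blast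
  then show ?thesis
    unfolding transpose_def vec_eq_iff
    by (simp add: Q_mat_def diag_mat_mult_entry) (auto simp: laplacian_def sel_mat_def diag_mat_def)
qed

lemma Q_mat_quadratic_form:
  assumes "undirected_graph E"
  shows "x \<bullet> (Q_mat E \<kappa> S *v x) = x \<bullet> (laplacian E *v x) + (\<Sum>i\<in>S. \<kappa> i * (x $ i)\<^sup>2)"
proof -
  have "x \<bullet> ((diag_mat \<kappa> ** sel_mat S) *v x) = (\<Sum>i\<in>UNIV. if i \<in> S then \<kappa> i * (x $ i)\<^sup>2 else 0)"
    unfolding inner_vec_def diag_sel_mult_component
    by (intro sum.cong) (auto simp: power2_eq_square)
  also have "\<dots> = (\<Sum>i\<in>S. \<kappa> i * (x $ i)\<^sup>2)"
    by (simp add: sum.If_cases)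
  finally show ?thesis
    unfolding Q_mat_def matrix_vector_mult_add_rdistrib inner_add_right by simp
qed

lemma Q_mat_quadratic_form_nonneg:
  assumes "undirected_graph E" "\<And>i. \<kappa> i > 0"
  shows "0 \<le> x \<bullet> (Q_mat E \<kappa> S *v x)"
  unfolding Q_mat_quadratic_form[OF assms(1)]
  using laplacian_quadratic_form_nonneg[OF assms(1)] assms(2)
  by (intro add_nonneg_nonneg sum_nonneg) (auto simp: less_imp_le)

lemma Q_mat_quadratic_form_mono:
  assumes "undirected_graph E" "\<And>i. \<kappa> i > 0" "S1 \<subseteq> S2"
  shows "x \<bullet> (Q_mat E \<kappa> S1 *v x) \<le> x \<bullet> (Q_mat E \<kappa> S2 *v x)"
proof -
  have "(\<Sum>i\<in>S1. \<kappa> i * (x $ i)\<^sup>2) \<le> (\<Sum>i\<in>S2. \<kappa> i * (x $ i)\<^sup>2)"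
    using assms(2,3) by (intro sum_mono2) (auto simp: less_imp_le)
  then show ?thesis unfolding Q_mat_quadratic_form[OF assms(1)] by simp
qed

lemma Q_mat_invertible:
  assumes "undirected_graph E" "connected_graph E" "\<And>i. \<kappa> i > 0" "v \<in> S"
  shows "invertible (Q_mat E \<kappa> S)"
proof -
  have "x = 0" if "Q_mat E \<kappa> S *v x = 0" for x
  proof -
    have "x \<bullet> (laplacian E *v x) + (\<Sum>i\<in>S. \<kappa> i * (x $ i)\<^sup>2) = 0"
      using that Q_mat_quadratic_form[OF assms(1), of x \<kappa> S] by simp
    moreover have "0 \<le> (\<Sum>i\<in>S. \<kappa> i * (x $ i)\<^sup>2)" "0 \<le> \<kappa> v * (x $ v)\<^sup>2"
      using assms(3) by (auto intro!: sum_nonneg simp: less_imp_le)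
    moreover have "\<kappa> v * (x $ v)\<^sup>2 \<le> (\<Sum>i\<in>S. \<kappa> i * (x $ i)\<^sup>2)"
      using assms(3,4) by (intro member_le_sum) (auto simp: less_imp_le)
    ultimately have L0: "x \<bullet> (laplacian E *v x) = 0" and "\<kappa> v * (x $ v)\<^sup>2 = 0"
      using laplacian_quadratic_form_nonneg[OF assms(1), of x] by linarith+
    then have "x $ v = 0" using assms(3)[of v] by simp
    moreover have "x $ u = x $ v" for u
      using connected_graph_constant[OF assms(2) laplacian_quadratic_form_eq_0_imp_edge[OF assms(1) L0]] .
    ultimately show "x = 0" by (simp add: vec_eq_iff)
  qed
  then show ?thesis using invertible_left_inverse matrix_left_invertible_ker by blast
qed

lemma trace_inv_Q_mat_antimono:
  assumes "undirected_graph E" "connected_graph E" "\<And>i. \<kappa> i > 0" "A \<noteq> {}" "A \<subseteq> B"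
  shows "trace (matrix_inv (Q_mat E \<kappa> B)) \<le> trace (matrix_inv (Q_mat E \<kappa> A))"
proof -
  obtain v where "v \<in> A" "v \<in> B" using assms(4,5) by blast
  then show ?thesis
    by (intro trace_matrix_inv_antimono Q_mat_invertible Q_mat_symmetric
        Q_mat_quadratic_form_nonneg Q_mat_quadratic_form_mono assms(1,2,3,5))
qed

theorem proposition1:
  fixes E :: "'n::finite \<Rightarrow> 'n \<Rightarrow> bool" and \<kappa> :: "'n \<Rightarrow> real"
    and S1 S2 :: "'n set"
  assumes "undirected_graph E"
    and "connected_graph E"
    and "\<And>i. \<kappa> i > 0"
    and "S1 \<subseteq> S2"
  shows "f_set E \<kappa> S1 \<le> f_set E \<kappa> S2"
proof (cases "S2 = {}")
  case False
  then obtain v where v: "v \<in> S2" by blast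
  let ?tr = "\<lambda>S. trace (matrix_inv (Q_mat E \<kappa> S))"
  have "0 \<le> ?tr {v}"
    by (intro trace_matrix_inv_nonneg Q_mat_invertible Q_mat_quadratic_form_nonneg assms(1-3)) simp
  moreover have "?tr S2 \<le> ?tr {v}"
    using v by (intro trace_inv_Q_mat_antimono assms(1-3)) auto
  moreover have "?tr {v} \<le> Max (range (\<lambda>v. ?tr {v}))"
    by (intro Max_ge finite_imageI) auto
  ultimately have "?tr S2 \<le> C_const E \<kappa>"
    unfolding C_const_def by linarith
  moreover have "?tr S2 \<le> ?tr S1" if "S1 \<noteq> {}"
    using that by (intro trace_inv_Q_mat_antimono assms)
  ultimately show ?thesis
    using False unfolding f_set_def by auto
qed (use assms(4) in simp)

end
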